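(* Let $0<\alpha<1$, let $\eta>0$ be sufficiently small, and let $\theta>0$. Let $B^2_{\eta/2}$ be the disk $$\{(x,Y^2):(x-\tfrac{3\eta}2)^2+(Y^2)^2\le(\tfrac\eta2)^2\}.$$ There exists a compactly supported function $\hat w\in H^{1/2}(\mathbb{R}^2)$ such that $$\hat w(x,Y^2)=\theta\int_{\mathbb{R}}\zeta_{\eta/10}(y)\,|\ln(x-y)|^\alpha\,\chi(x-y)\,dy\qquad\text{for }(x,Y^2)\in B^2_{\eta/2},$$ and $$\|\hat w\|_{\dot H^{1/2}(\mathbb{R}^2)}\lesssim\theta\,\eta^{1/4}\big(1+|\ln\tfrac{6\eta}5|^\alpha+|\ln\tfrac{9\eta}5|^\alpha\big),$$ where the implicit constant is independent of $\eta$ and $\theta$.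
   Context: $\chi$ is the indicator function of the interval $[\tfrac65\eta,\tfrac95\eta]$. $\zeta_{\eta/10}\in C_c^\infty(\mathbb{R})$ is a function with support in $\{|x|\le\eta/10\}$, satisfying $0\le\zeta_{\eta/10}\le 20/\eta$ and $\int_{\mathbb{R}}\zeta_{\eta/10}=1$. *)

theory Defs
  imports "HOL-Analysis.Analysis"
begin

definition smooth_real :: "(real \<Rightarrow> real) \<Rightarrow> bool" where
  "smooth_real f \<longleftrightarrow> (\<forall>n x. ((deriv ^^ n) f) differentiable (at x))"

text \<open>Squared Gagliardo seminorm of order s = 1/2 on R^2 (points are real \<times> real with the
  Euclidean distance): the double integral of |u p - u q|^2 / |p - q|^(2 + 2s), with 2 + 2s = 3.\<close>
definition gagliardo_half_sq :: "(real \<times> real \<Rightarrow> real) \<Rightarrow> ennreal" where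
  "gagliardo_half_sq u =
     (\<integral>\<^sup>+ p. (\<integral>\<^sup>+ q. ennreal ((u p - u q)^2 / (dist p q) ^ 3) \<partial>lborel) \<partial>lborel)"

definition Hdot_half_norm :: "(real \<times> real \<Rightarrow> real) \<Rightarrow> real" where
  "Hdot_half_norm u = sqrt (enn2real (gagliardo_half_sq u))"

definition H_half :: "(real \<times> real \<Rightarrow> real) set" where
  "H_half = {u. u \<in> borel_measurable lborel \<and> integrable lborel (\<lambda>p. (u p)^2)
                 \<and> gagliardo_half_sq u < \<infinity>}"

end

theory Submission
  imports Defs
begin

text \<open>
  A function u on the plane that is bounded by K, L-Lipschitz and supported in a set of
  area m has squared Gagliardo seminorm at most 64 m K L: the integrand is dominated by
  min (L^2 / |p - q|) (4 K^2 / |p - q|^3), whose integral over the plane is 32 K L.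
  Convolving the truncated profile |ln t|^alpha on [6 eta/5, 9 eta/5] with the mollifier
  (which is bounded by 20/eta) gives a function of x bounded by M = |ln (6 eta/5)|^alpha and
  Lipschitz with constant O(M/eta), because every shift of the profile moves it by
  O(M) times the shift in L1 (|ln t|^alpha is (1/a)-Lipschitz on [a, exp (-1)] for
  alpha <= 1). A cutoff equal to 1 on the disk, 2/eta-Lipschitz and vanishing outside a
  square of side 2 eta then gives K = theta M, L = O(theta M / eta) and m = 4 eta^2, so the
  seminorm is O(theta eta^(1/2) M).
\<close>

section \<open>The Gagliardo seminorm of bounded Lipschitz functions\<close>

lemma nn_integral_inverse_square_tail:
  fixes B r :: real assumes "B > 0" "r > 0"
  shows "(\<integral>\<^sup>+t. ennreal (indicator {r..} t * (B * t powr -2)) \<partial>lborel) = ennreal (B / r)"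
proof -
  have "((\<lambda>t. t powr -2) has_integral -(r powr (-2+1)) / (-2+1)) {r..}"
    by (rule has_integral_powr_to_inf) (use assms in auto)
  then have "((\<lambda>t. B * t powr -2) has_integral B * (-(r powr (-2+1)) / (-2+1))) {r..}"
    by (rule has_integral_mult_right)
  moreover have "B * (-(r powr (-2+1)) / (-2+1)) = B / r"
    using assms by (simp add: powr_minus_divide)
  ultimately have "((\<lambda>t. B * t powr -2) has_integral B / r) {r..}" by metis
  from nn_integral_has_integral_lebesgue[OF _ this] assms show ?thesis by auto
qed

lemma nn_integral_min_inverse_square_le:
  fixes A B :: real assumes A: "A > 0" and B: "B > 0"
  shows "(\<integral>\<^sup>+t. ennreal (min A (B / t^2)) \<partial>lborel) \<le> ennreal (4 * sqrt (A * B))"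
proof -
  define r where "r = sqrt (B / A)"
  have r: "r > 0" using A B by (simp add: r_def)
  define tail where "tail t = indicator {r..} t * (B * t powr -2)" for t :: real
  have tail_nonneg: "0 \<le> tail t" for t using B by (simp add: tail_def)
  have pointwise: "min A (B / t^2) \<le> A * indicator {-r..r} t + tail t + tail (-t)" for t
  proof -
    have "B / t^2 = B * \<bar>t\<bar> powr -2" if "t \<noteq> 0"
      using that by (simp add: powr_minus_divide powr_realpow)
    then show ?thesis
      using A r tail_nonneg[of t] tail_nonneg[of "-t"]
      by (cases "\<bar>t\<bar> \<le> r") (auto simp: tail_def indicator_def abs_if split: if_splits)
  qed
  have "(\<integral>\<^sup>+t. ennreal (min A (B / t^2)) \<partial>lborel)
      \<le> (\<integral>\<^sup>+t. ennreal (A * indicator {-r..r} t) + ennreal (tail t) + ennreal (tail (-t)) \<partial>lborel)"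
    using pointwise A tail_nonneg
    by (intro nn_integral_mono) (simp add: ennreal_plus[symmetric] del: ennreal_plus)
  also have "\<dots> = (\<integral>\<^sup>+t. ennreal (A * indicator {-r..r} t) \<partial>lborel)
      + (\<integral>\<^sup>+t. ennreal (tail t) \<partial>lborel) + (\<integral>\<^sup>+t. ennreal (tail (-t)) \<partial>lborel)"
    by (subst nn_integral_add; (subst nn_integral_add)?) (auto simp: tail_def)
  also have "(\<integral>\<^sup>+t. ennreal (tail (-t)) \<partial>lborel) = (\<integral>\<^sup>+t. ennreal (tail t) \<partial>lborel)"
    using nn_integral_real_affine[of "\<lambda>t. ennreal (tail t)" "-1" 0] by (simp add: tail_def)
  also have "(\<integral>\<^sup>+t. ennreal (tail t) \<partial>lborel) = ennreal (B / r)"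
    unfolding tail_def by (rule nn_integral_inverse_square_tail[OF B r])
  also have "(\<integral>\<^sup>+t. ennreal (A * indicator {-r..r} t) \<partial>lborel) = ennreal (A * (2 * r))"
    using A r by (simp add: ennreal_mult ennreal_indicator nn_integral_cmult_indicator)
  also have "A * r = sqrt (A * B)" and "B / r = sqrt (A * B)"
    using A B by (simp_all add: r_def real_sqrt_divide real_sqrt_mult field_simps)
  then have "ennreal (A * (2 * r)) + ennreal (B / r) + ennreal (B / r) = ennreal (4 * sqrt (A * B))"
    using A B r by (simp flip: ennreal_plus)
  finally show ?thesis .
qed

lemma nn_integral_lborel_pair:
  fixes f :: "real \<times> real \<Rightarrow> ennreal"
  assumes [measurable]: "f \<in> borel_measurable borel"
  shows "(\<integral>\<^sup>+z. f z \<partial>lborel) = (\<integral>\<^sup>+x. \<integral>\<^sup>+y. f (x, y) \<partial>lborel \<partial>lborel)"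
  by (subst lborel_prod[symmetric], subst lborel.nn_integral_fst) (auto simp: lborel_prod)

definition radial_majorant :: "real \<Rightarrow> real \<Rightarrow> real \<Rightarrow> real" where
  "radial_majorant A B r = min (A / r) (B / r ^ 3)"

lemma radial_majorant_nonneg: "0 \<le> A \<Longrightarrow> 0 \<le> B \<Longrightarrow> 0 \<le> r \<Longrightarrow> 0 \<le> radial_majorant A B r"
  by (simp add: radial_majorant_def)

lemma borel_measurable_radial_majorant [measurable]: "radial_majorant A B \<in> borel_measurable borel"
  unfolding radial_majorant_def by measurable

lemma radial_majorant_antimono:
  assumes "0 \<le> A" "0 \<le> B" "0 < r" "r \<le> s"
  shows "radial_majorant A B s \<le> radial_majorant A B r"
proof -
  have "A / s \<le> A / r" and "B / s ^ 3 \<le> B / r ^ 3"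
    using assms by (auto intro!: divide_left_mono power_mono mult_pos_pos)
  then show ?thesis by (auto simp: radial_majorant_def)
qed

lemma abs_mult_radial_majorant: "0 \<le> A \<Longrightarrow> \<bar>x\<bar> * radial_majorant A B \<bar>x\<bar> = min A (B / x^2)"
  by (cases "x = 0")
     (auto simp: radial_majorant_def min_mult_distrib_left power2_eq_square power3_eq_cube)

lemma nn_integral_radial_majorant_half_le:
  assumes A: "A > 0" and B: "B > 0"
  shows "(\<integral>\<^sup>+x. \<integral>\<^sup>+y. ennreal (if \<bar>y\<bar> \<le> \<bar>x\<bar> then radial_majorant A B \<bar>x\<bar> else 0) \<partial>lborel \<partial>lborel)
    \<le> ennreal (8 * sqrt (A * B))"
proof -
  have inner: "(\<integral>\<^sup>+y. ennreal (if \<bar>y\<bar> \<le> \<bar>x\<bar> then radial_majorant A B \<bar>x\<bar> else 0) \<partial>lborel)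
      = ennreal 2 * ennreal (min A (B / x^2))" for x
  proof -
    have "(\<integral>\<^sup>+y. ennreal (if \<bar>y\<bar> \<le> \<bar>x\<bar> then radial_majorant A B \<bar>x\<bar> else 0) \<partial>lborel)
        = (\<integral>\<^sup>+y. ennreal (radial_majorant A B \<bar>x\<bar>) * indicator {-\<bar>x\<bar>..\<bar>x\<bar>} y \<partial>lborel)"
      by (intro nn_integral_cong) (auto simp: indicator_def abs_le_iff)
    also have "\<dots> = ennreal (radial_majorant A B \<bar>x\<bar>) * ennreal (2 * \<bar>x\<bar>)"
      by (simp add: nn_integral_cmult_indicator)
    also have "\<dots> = ennreal (2 * (\<bar>x\<bar> * radial_majorant A B \<bar>x\<bar>))"
      using A B radial_majorant_nonneg[of A B "\<bar>x\<bar>"] by (simp add: ennreal_mult[symmetric] ac_simps)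
    also have "\<dots> = ennreal 2 * ennreal (min A (B / x^2))"
      using A B by (simp add: abs_mult_radial_majorant ennreal_mult)
    finally show ?thesis .
  qed
  have "(\<integral>\<^sup>+x. \<integral>\<^sup>+y. ennreal (if \<bar>y\<bar> \<le> \<bar>x\<bar> then radial_majorant A B \<bar>x\<bar> else 0) \<partial>lborel \<partial>lborel)
      = ennreal 2 * (\<integral>\<^sup>+x. ennreal (min A (B / x^2)) \<partial>lborel)"
    unfolding inner by (rule nn_integral_cmult) measurable
  also have "\<dots> \<le> ennreal 2 * ennreal (4 * sqrt (A * B))"
    by (intro mult_left_mono nn_integral_min_inverse_square_le A B) simp
  also have "\<dots> = ennreal (8 * sqrt (A * B))"
    using A B by (subst ennreal_mult[symmetric]) auto
  finally show ?thesis .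
qed

lemma nn_integral_radial_majorant_le:
  assumes A: "A > 0" and B: "B > 0"
  shows "(\<integral>\<^sup>+z. ennreal (radial_majorant A B (norm z)) \<partial>(lborel :: (real \<times> real) measure))
    \<le> ennreal (16 * sqrt (A * B))"
proof -
  let ?half = "\<lambda>x y. ennreal (if \<bar>y\<bar> \<le> \<bar>x\<bar> then radial_majorant A B \<bar>x\<bar> else 0)"
  have mono: "radial_majorant A B (norm (x, y)) \<le> radial_majorant A B \<bar>x\<bar>"
    if "\<bar>y\<bar> \<le> \<bar>x\<bar>" for x y :: real
  proof (cases "x = 0")
    case False
    then show ?thesis
      using A B by (intro radial_majorant_antimono) (auto simp: norm_Pair real_sqrt_ge_abs1)
  qed (use that in auto)
  have pointwise: "ennreal (radial_majorant A B (norm (x, y))) \<le> ?half x y + ?half y x" for x y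
  proof -
    have "radial_majorant A B (norm (x, y))
        \<le> (if \<bar>y\<bar> \<le> \<bar>x\<bar> then radial_majorant A B \<bar>x\<bar> else 0)
          + (if \<bar>x\<bar> \<le> \<bar>y\<bar> then radial_majorant A B \<bar>y\<bar> else 0)"
    proof (cases "\<bar>y\<bar> \<le> \<bar>x\<bar>")
      case True
      then show ?thesis
        using mono[OF True] radial_majorant_nonneg[of A B "\<bar>y\<bar>"] radial_majorant_nonneg[of A B "\<bar>x\<bar>"] A B
        by auto
    next
      case False
      then have "\<bar>x\<bar> \<le> \<bar>y\<bar>" by simp
      moreover have "norm (x, y) = norm (y, x)" by (simp add: norm_Pair add.commute)
      ultimately show ?thesis
        using mono[of x y] False by simp
    qed
    then show ?thesis
      using A B radial_majorant_nonneg[of A B]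
      by (simp add: ennreal_plus[symmetric] del: ennreal_plus)
  qed
  have "(\<integral>\<^sup>+z. ennreal (radial_majorant A B (norm z)) \<partial>(lborel :: (real \<times> real) measure))
      = (\<integral>\<^sup>+x. \<integral>\<^sup>+y. ennreal (radial_majorant A B (norm (x :: real, y :: real))) \<partial>lborel \<partial>lborel)"
    by (rule nn_integral_lborel_pair) measurable
  also have "\<dots> \<le> (\<integral>\<^sup>+x. \<integral>\<^sup>+y. ?half x y + ?half y x \<partial>lborel \<partial>lborel)"
    by (intro nn_integral_mono pointwise)
  also have "\<dots> = (\<integral>\<^sup>+x. \<integral>\<^sup>+y. ?half x y \<partial>lborel \<partial>lborel) + (\<integral>\<^sup>+x. \<integral>\<^sup>+y. ?half y x \<partial>lborel \<partial>lborel)"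
    by (subst nn_integral_add[symmetric]; (measurable)?)
       (auto intro!: nn_integral_cong nn_integral_add)
  also have "(\<integral>\<^sup>+x. \<integral>\<^sup>+y. ?half y x \<partial>lborel \<partial>lborel) = (\<integral>\<^sup>+y. \<integral>\<^sup>+x. ?half y x \<partial>lborel \<partial>lborel)"
    by (rule lborel_pair.Fubini'[symmetric]) measurable
  also have "(\<integral>\<^sup>+x. \<integral>\<^sup>+y. ?half x y \<partial>lborel \<partial>lborel) + (\<integral>\<^sup>+y. \<integral>\<^sup>+x. ?half y x \<partial>lborel \<partial>lborel)
      \<le> ennreal (8 * sqrt (A * B)) + ennreal (8 * sqrt (A * B))"
    using nn_integral_radial_majorant_half_le[OF A B] by (intro add_mono)
  also have "\<dots> = ennreal (16 * sqrt (A * B))"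
    using A B by (simp flip: ennreal_plus)
  finally show ?thesis .
qed

lemma nn_integral_dist_lborel:
  fixes p :: "'a::euclidean_space"
  assumes [measurable]: "f \<in> borel_measurable borel"
  shows "(\<integral>\<^sup>+q. f (dist p q) \<partial>lborel) = (\<integral>\<^sup>+z. f (norm (z :: 'a)) \<partial>lborel)"
proof -
  have "(\<integral>\<^sup>+z. f (norm (z :: 'a)) \<partial>lborel) = (\<integral>\<^sup>+z. f (norm z) \<partial>distr lborel borel ((+) (-p)))"
    by (simp only: lborel_distr_plus)
  also have "\<dots> = (\<integral>\<^sup>+q. f (norm (-p + q)) \<partial>lborel)"
    by (subst nn_integral_distr) auto
  also have "\<dots> = (\<integral>\<^sup>+q. f (dist p q) \<partial>lborel)"
    by (simp add: dist_norm norm_minus_commute)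
  finally show ?thesis ..
qed

lemma gagliardo_half_sq_le_lipschitz:
  fixes u :: "real \<times> real \<Rightarrow> real"
  assumes K: "K > 0" and L: "L > 0" and bounded: "\<And>p. \<bar>u p\<bar> \<le> K"
    and lipschitz: "\<And>p q. \<bar>u p - u q\<bar> \<le> L * dist p q"
    and support: "\<And>p. p \<notin> S \<Longrightarrow> u p = 0"
    and S [measurable]: "S \<in> sets borel" and S_measure: "emeasure lborel S \<le> ennreal m" and m: "0 \<le> m"
  shows "gagliardo_half_sq u \<le> ennreal (64 * m * K * L)"
proof -
  let ?k = "\<lambda>r. ennreal (radial_majorant (L^2) (4 * K^2) r)"
  have k_borel: "?k \<in> borel_measurable borel"
    by measurable
  define I where "I = (\<integral>\<^sup>+z. ?k (norm z) \<partial>(lborel :: (real \<times> real) measure))"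
  have I: "I \<le> ennreal (32 * K * L)"
  proof -
    have "sqrt (L^2 * (4 * K^2)) = 2 * K * L"
      using K L by (simp add: real_sqrt_mult)
    then show ?thesis
      unfolding I_def using nn_integral_radial_majorant_le[of "L^2" "4 * K^2"] K L by (simp add: ac_simps)
  qed
  have quotient_le: "(u p - u q)^2 / dist p q ^ 3 \<le> radial_majorant (L^2) (4 * K^2) (dist p q)" for p q
  proof (cases "p = q")
    case False
    then have d: "dist p q > 0" by simp
    have "(u p - u q)^2 \<le> (L * dist p q)^2"
      using lipschitz[of p q] by (metis abs_ge_zero power2_abs power_mono)
    then have "(u p - u q)^2 / dist p q ^ 3 \<le> (L * dist p q)^2 / dist p q ^ 3"
      using d by (simp add: divide_right_mono)
    also have "\<dots> = L^2 / dist p q"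
      using d by (simp add: power2_eq_square power3_eq_cube)
    finally have "(u p - u q)^2 / dist p q ^ 3 \<le> L^2 / dist p q" .
    moreover have "\<bar>u p - u q\<bar> \<le> 2 * K"
      using bounded[of p] bounded[of q] by linarith
    then have "(u p - u q)^2 \<le> (2 * K)^2"
      by (metis abs_ge_zero power2_abs power_mono)
    then have "(u p - u q)^2 / dist p q ^ 3 \<le> 4 * K^2 / dist p q ^ 3"
      using d by (simp add: divide_right_mono power_mult_distrib)
    ultimately show ?thesis by (simp add: radial_majorant_def)
  qed (simp add: radial_majorant_def)
  have pointwise: "ennreal ((u p - u q)^2 / dist p q ^ 3)
      \<le> ?k (dist p q) * indicator S p + ?k (dist q p) * indicator S q" for p q
  proof (cases "p \<in> S \<or> q \<in> S")
    case True
    then have "ennreal ((u p - u q)^2 / dist p q ^ 3) \<le> ?k (dist p q)"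
      by (intro ennreal_leI quotient_le)
    also have "\<dots> \<le> ?k (dist p q) * indicator S p + ?k (dist q p) * indicator S q"
      using True by (cases "p \<in> S") (simp_all add: dist_commute)
    finally show ?thesis .
  qed (use support in auto)
  have inner: "(\<integral>\<^sup>+q. ?k (dist p q) * indicator S p \<partial>lborel) = I * indicator S p" for p
    unfolding I_def by (simp add: nn_integral_multc nn_integral_dist_lborel[OF k_borel])
  have first: "(\<integral>\<^sup>+p. \<integral>\<^sup>+q. ?k (dist p q) * indicator S p \<partial>lborel \<partial>lborel) = I * emeasure lborel S"
    unfolding inner by (simp add: nn_integral_cmult_indicator)
  have "(\<integral>\<^sup>+p. \<integral>\<^sup>+q. ?k (dist q p) * indicator S q \<partial>lborel \<partial>lborel)
      = (\<integral>\<^sup>+q. \<integral>\<^sup>+p. ?k (dist q p) * indicator S q \<partial>lborel \<partial>lborel)"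
    by (rule lborel_pair.Fubini'[symmetric]) measurable
  with first have second: "(\<integral>\<^sup>+p. \<integral>\<^sup>+q. ?k (dist q p) * indicator S q \<partial>lborel \<partial>lborel) = I * emeasure lborel S"
    by simp
  have "gagliardo_half_sq u \<le> (\<integral>\<^sup>+p. \<integral>\<^sup>+q. ?k (dist p q) * indicator S p + ?k (dist q p) * indicator S q \<partial>lborel \<partial>lborel)"
    unfolding gagliardo_half_sq_def by (intro nn_integral_mono pointwise)
  also have "\<dots> = (\<integral>\<^sup>+p. \<integral>\<^sup>+q. ?k (dist p q) * indicator S p \<partial>lborel \<partial>lborel)
      + (\<integral>\<^sup>+p. \<integral>\<^sup>+q. ?k (dist q p) * indicator S q \<partial>lborel \<partial>lborel)"
    by (subst nn_integral_add[symmetric]; (measurable)?) (auto intro!: nn_integral_cong nn_integral_add)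
  also have "\<dots> = I * emeasure lborel S + I * emeasure lborel S"
    by (simp only: first second)
  also have "\<dots> \<le> ennreal (32 * K * L) * ennreal m + ennreal (32 * K * L) * ennreal m"
    by (intro add_mono mult_mono I S_measure) auto
  also have "\<dots> = ennreal (64 * m * K * L)"
    using K L m by (simp add: ennreal_mult[symmetric] ennreal_plus[symmetric] del: ennreal_plus)
  finally show ?thesis .
qed

lemma compact_closure_support:
  fixes u :: "'a::t2_space \<Rightarrow> 'b::zero"
  assumes "compact S" and "\<And>p. p \<notin> S \<Longrightarrow> u p = 0"
  shows "compact (closure {p. u p \<noteq> 0})"
proof -
  have "closure {p. u p \<noteq> 0} \<subseteq> S"
    using assms by (intro closure_minimal compact_imp_closed) auto
  then show ?thesis
    using assms(1) closed_closure compact_Int_closed[of S] by (metis inf.absorb2)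
qed

lemma H_half_if_lipschitz:
  fixes u :: "real \<times> real \<Rightarrow> real"
  assumes K: "K > 0" and L: "L > 0" and bounded: "\<And>p. \<bar>u p\<bar> \<le> K"
    and lipschitz: "\<And>p q. \<bar>u p - u q\<bar> \<le> L * dist p q"
    and support: "\<And>p. p \<notin> S \<Longrightarrow> u p = 0"
    and S: "compact S" and S_measure: "emeasure lborel S \<le> ennreal m" and m: "0 \<le> m"
  shows "u \<in> H_half" and "Hdot_half_norm u \<le> 8 * sqrt (m * K * L)"
proof -
  have S_borel [measurable]: "S \<in> sets borel"
    using S by (simp add: compact_imp_closed)
  have gagliardo: "gagliardo_half_sq u \<le> ennreal (64 * m * K * L)"
    by (rule gagliardo_half_sq_le_lipschitz[OF K L bounded lipschitz support S_borel S_measure m])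
  have "L-lipschitz_on UNIV u"
    using lipschitz L by (intro lipschitz_onI) (simp_all add: dist_real_def)
  then have u_borel [measurable]: "u \<in> borel_measurable lborel"
    by (simp add: borel_measurable_continuous_onI lipschitz_on_continuous_on)
  have square_le: "(u p)^2 \<le> K^2 * indicator S p" for p
  proof (cases "p \<in> S")
    case True
    then show ?thesis using bounded[of p] by (simp add: abs_le_square_iff[symmetric] K less_imp_le)
  qed (simp add: support)
  have "emeasure lborel S < \<infinity>"
    using S_measure by (simp add: le_less_trans)
  then have "integrable lborel (\<lambda>p. K^2 * indicator S p :: real)"
    by (intro integrable_mult_right integrable_real_indicator) simp_all
  then have "integrable lborel (\<lambda>p. (u p)^2)"
    by (rule Bochner_Integration.integrable_bound) (use square_le in \<open>auto intro!: AE_I2\<close>)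
  then show "u \<in> H_half"
    using gagliardo by (auto simp: H_half_def top_unique intro: le_less_trans)
  have "Hdot_half_norm u \<le> sqrt (64 * m * K * L)"
    unfolding Hdot_half_norm_def using gagliardo K L m
    by (intro real_sqrt_le_mono enn2real_leI) auto
  also have "\<dots> = 8 * sqrt (m * K * L)"
    by (simp add: real_sqrt_mult)
  finally show "Hdot_half_norm u \<le> 8 * sqrt (m * K * L)" .
qed

section \<open>Convolution with a bounded density\<close>

definition convolution :: "(real \<Rightarrow> real) \<Rightarrow> (real \<Rightarrow> real) \<Rightarrow> real \<Rightarrow> real" where
  "convolution \<zeta> g x = (\<integral>y. \<zeta> y * g (x - y) \<partial>lborel)"

lemma integrable_convolution_integrand:
  fixes \<zeta> g :: "real \<Rightarrow> real"
  assumes "integrable lborel \<zeta>" and [measurable]: "g \<in> borel_measurable borel"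
    and bounded: "\<And>t. \<bar>g t\<bar> \<le> M"
  shows "integrable lborel (\<lambda>y. \<zeta> y * g (x - y))"
proof (rule Bochner_Integration.integrable_bound[where f = "\<lambda>y. M * \<bar>\<zeta> y\<bar>"])
  show "integrable lborel (\<lambda>y. M * \<bar>\<zeta> y\<bar>)"
    using assms(1) by (intro integrable_mult_right integrable_abs)
  have "\<bar>\<zeta> y * g (x - y)\<bar> \<le> M * \<bar>\<zeta> y\<bar>" for y
    using mult_left_mono[OF bounded[of "x - y"] abs_ge_zero[of "\<zeta> y"]] by (simp add: abs_mult mult.commute)
  moreover have "0 \<le> M"
    using bounded[of 0] by linarith
  ultimately show "AE y in lborel. norm (\<zeta> y * g (x - y)) \<le> norm (M * \<bar>\<zeta> y\<bar>)"
    by (simp add: abs_mult)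
qed (use assms(1) in measurable)

lemma abs_convolution_le:
  assumes \<zeta>: "integrable lborel \<zeta>" "\<And>y. 0 \<le> \<zeta> y" "integral\<^sup>L lborel \<zeta> = 1"
    and g [measurable]: "g \<in> borel_measurable borel" and bounded: "\<And>t. \<bar>g t\<bar> \<le> M"
  shows "\<bar>convolution \<zeta> g x\<bar> \<le> M"
proof -
  have "\<bar>\<zeta> y * g (x - y)\<bar> \<le> M * \<zeta> y" for y
    using mult_left_mono[OF bounded[of "x - y"] \<zeta>(2)[of y]] \<zeta>(2)[of y] by (simp add: abs_mult mult.commute)
  then have "\<bar>convolution \<zeta> g x\<bar> \<le> (\<integral>y. M * \<zeta> y \<partial>lborel)"
    unfolding convolution_def using \<zeta>(1)
    by (intro integral_abs_bound_integral integrable_convolution_integrand[OF \<zeta>(1) g bounded]) auto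
  then show ?thesis
    using \<zeta> by simp
qed

lemma convolution_lipschitz:
  assumes \<zeta>: "integrable lborel \<zeta>" "\<And>y. 0 \<le> \<zeta> y" "\<And>y. \<zeta> y \<le> Z"
    and g [measurable]: "g \<in> borel_measurable borel" and bounded: "\<And>t. \<bar>g t\<bar> \<le> M"
    and shift: "\<And>h. 0 \<le> h \<Longrightarrow> integrable lborel (\<lambda>t. g (t + h) - g t)"
    and shift_l1: "\<And>h. 0 \<le> h \<Longrightarrow> (\<integral>t. \<bar>g (t + h) - g t\<bar> \<partial>lborel) \<le> V * h"
  shows "\<bar>convolution \<zeta> g x - convolution \<zeta> g x'\<bar> \<le> Z * V * \<bar>x - x'\<bar>"
proof -
  have Z: "0 \<le> Z" using \<zeta>(2,3) order.trans by blast
  have shift_bound: "\<bar>convolution \<zeta> g (x' + h) - convolution \<zeta> g x'\<bar> \<le> Z * V * h"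
    if h: "0 \<le> h" for x' h
  proof -
    let ?\<Delta> = "\<lambda>t. \<bar>g (t + h) - g t\<bar>"
    have \<Delta>: "integrable lborel ?\<Delta>"
      using shift[OF h] by (rule integrable_abs)
    have \<Delta>_reflected: "integrable lborel (\<lambda>y. ?\<Delta> (x' + (-1) * y))"
      using lborel_integrable_real_affine[OF \<Delta>, of "-1" x'] by simp
    have "convolution \<zeta> g (x' + h) - convolution \<zeta> g x'
        = (\<integral>y. \<zeta> y * g (x' + h - y) - \<zeta> y * g (x' - y) \<partial>lborel)"
      unfolding convolution_def
      by (intro Bochner_Integration.integral_diff[symmetric] integrable_convolution_integrand[OF \<zeta>(1) g bounded])
    also have "\<bar>\<dots>\<bar> \<le> (\<integral>y. Z * ?\<Delta> (x' + (-1) * y) \<partial>lborel)"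
    proof (intro integral_abs_bound_integral)
      show "integrable lborel (\<lambda>y. \<zeta> y * g (x' + h - y) - \<zeta> y * g (x' - y))"
        by (intro Bochner_Integration.integrable_diff integrable_convolution_integrand[OF \<zeta>(1) g bounded])
      show "integrable lborel (\<lambda>y. Z * ?\<Delta> (x' + (-1) * y))"
        using \<Delta>_reflected by simp
      show "\<bar>\<zeta> y * g (x' + h - y) - \<zeta> y * g (x' - y)\<bar> \<le> Z * ?\<Delta> (x' + (-1) * y)" for y
      proof -
        have "x' + h - y = x' + (-1) * y + h" and "x' - y = x' + (-1) * y" by simp_all
        then have "\<bar>\<zeta> y * g (x' + h - y) - \<zeta> y * g (x' - y)\<bar> = \<zeta> y * ?\<Delta> (x' + (-1) * y)"
          using \<zeta>(2)[of y] by (simp only: abs_mult right_diff_distrib[symmetric] abs_of_nonneg)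
        also have "\<dots> \<le> Z * ?\<Delta> (x' + (-1) * y)"
          using \<zeta>(3)[of y] by (rule mult_right_mono) simp
        finally show ?thesis .
      qed
    qed
    also have "\<dots> = Z * (\<integral>t. ?\<Delta> t \<partial>lborel)"
      using lborel_integral_real_affine[of "-1" ?\<Delta> x'] by simp
    also have "\<dots> \<le> Z * (V * h)"
      using shift_l1[OF h] Z by (rule mult_left_mono)
    finally show ?thesis by simp
  qed
  show ?thesis
  proof (cases "x' \<le> x")
    case True
    then show ?thesis using shift_bound[of "x - x'" x'] by simp
  next
    case False
    then show ?thesis using shift_bound[of "x' - x" x] by (simp add: abs_minus_commute)
  qed
qed

section \<open>The truncated logarithmic profile\<close>

lemma powr_diff_le_diff:
  fixes u v \<alpha> :: real
  assumes "1 \<le> v" "v \<le> u" "\<alpha> \<le> 1"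
  shows "u powr \<alpha> - v powr \<alpha> \<le> u - v"
proof -
  have v: "v > 0" and q: "u / v \<ge> 1" using assms by simp_all
  have "u powr \<alpha> = v powr \<alpha> * (u / v) powr \<alpha>"
    using assms v by (simp add: powr_divide)
  also have "\<dots> \<le> v powr \<alpha> * (u / v)"
    using powr_mono[of \<alpha> 1 "u / v"] q assms by (intro mult_left_mono) auto
  finally have "u powr \<alpha> - v powr \<alpha> \<le> v powr \<alpha> * (u / v - 1)"
    by (simp add: algebra_simps)
  also have "\<dots> \<le> v * (u / v - 1)"
    using powr_mono[of \<alpha> 1 v] q assms by (intro mult_right_mono) auto
  also have "\<dots> = u - v"
    using v by (simp add: field_simps)
  finally show ?thesis .
qed

lemma abs_ln_powr_diff_le:
  fixes a s t \<alpha> :: real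
  assumes "0 < a" "a \<le> s" "s \<le> t" "t \<le> exp (-1)" "0 \<le> \<alpha>" "\<alpha> \<le> 1"
  shows "\<bar>\<bar>ln s\<bar> powr \<alpha> - \<bar>ln t\<bar> powr \<alpha>\<bar> \<le> (t - s) / a"
proof -
  have s: "0 < s" using assms by simp
  have "ln t \<le> ln (exp (-1))"
    using assms s by (subst ln_le_cancel_iff) auto
  then have ln_t: "ln t \<le> -1" by simp
  have ln_s: "ln s \<le> ln t"
    using assms s by simp
  have abs_ln: "1 \<le> \<bar>ln t\<bar>" "\<bar>ln t\<bar> \<le> \<bar>ln s\<bar>"
    using ln_t ln_s by linarith+
  have "\<bar>ln s\<bar> powr \<alpha> - \<bar>ln t\<bar> powr \<alpha> \<le> \<bar>ln s\<bar> - \<bar>ln t\<bar>"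
    using abs_ln assms by (intro powr_diff_le_diff)
  also have "\<dots> = ln t - ln s"
    using ln_t ln_s by linarith
  also have "\<dots> = ln (t / s)"
    using s assms by (simp add: ln_div)
  also have "\<dots> \<le> t / s - 1"
    using s assms by (intro ln_le_minus_one) simp
  also have "\<dots> = (t - s) / s"
    using s by (simp add: field_simps)
  also have "\<dots> \<le> (t - s) / a"
    using s assms by (intro divide_left_mono) auto
  finally have "\<bar>ln s\<bar> powr \<alpha> - \<bar>ln t\<bar> powr \<alpha> \<le> (t - s) / a" .
  moreover have "\<bar>ln t\<bar> powr \<alpha> \<le> \<bar>ln s\<bar> powr \<alpha>"
    using abs_ln assms by (intro powr_mono2) auto
  ultimately show ?thesis by linarith
qed

definition log_profile :: "real \<Rightarrow> real \<Rightarrow> real \<Rightarrow> real \<Rightarrow> real" where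
  "log_profile \<alpha> a b t = \<bar>ln t\<bar> powr \<alpha> * indicator {a..b} t"

lemma borel_measurable_log_profile [measurable]: "log_profile \<alpha> a b \<in> borel_measurable borel"
  unfolding log_profile_def by measurable

lemma abs_log_profile_le:
  assumes "0 < a" "b \<le> 1" "0 \<le> \<alpha>"
  shows "\<bar>log_profile \<alpha> a b t\<bar> \<le> \<bar>ln a\<bar> powr \<alpha>"
proof (cases "t \<in> {a..b}")
  case True
  then have "\<bar>ln t\<bar> \<le> \<bar>ln a\<bar>"
    using assms by auto
  then show ?thesis
    using True assms by (simp add: log_profile_def powr_mono2)
qed (simp add: log_profile_def)

lemma log_profile_shift_diff_le:
  assumes "0 < a" "a \<le> b" "b \<le> exp (-1)" "0 \<le> \<alpha>" "\<alpha> \<le> 1" "0 \<le> h"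
  shows "\<bar>log_profile \<alpha> a b (t + h) - log_profile \<alpha> a b t\<bar>
    \<le> h / a * indicator {a..b} t + \<bar>ln a\<bar> powr \<alpha> * (indicator {a-h..a} t + indicator {b-h..b} t)"
    (is "?lhs \<le> ?rhs")
proof -
  have b: "b \<le> 1"
    using assms(3) by (meson exp_le_one_iff neg_le_0_iff_le order.trans zero_le_one)
  have rhs_nonneg: "0 \<le> ?rhs"
    and inner_nonneg: "0 \<le> h / a * indicator {a..b} t"
    and left_nonneg: "0 \<le> \<bar>ln a\<bar> powr \<alpha> * indicator {a-h..a} t"
    and right_nonneg: "0 \<le> \<bar>ln a\<bar> powr \<alpha> * indicator {b-h..b} t"
    using assms by (auto intro!: add_nonneg_nonneg mult_nonneg_nonneg)
  have bound: "\<bar>log_profile \<alpha> a b s\<bar> \<le> \<bar>ln a\<bar> powr \<alpha>" for s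
    using abs_log_profile_le[of a b \<alpha> s] assms b by simp
  consider "t \<in> {a..b}" "t + h \<in> {a..b}" | "t \<in> {a..b}" "t + h \<notin> {a..b}"
    | "t \<notin> {a..b}" "t + h \<in> {a..b}" | "t \<notin> {a..b}" "t + h \<notin> {a..b}"
    by blast
  then show ?thesis
  proof cases
    case 1
    then have "?lhs \<le> h / a * indicator {a..b} t"
      using abs_ln_powr_diff_le[of a t "t + h" \<alpha>] assms
      by (simp add: log_profile_def abs_minus_commute)
    then show ?thesis
      unfolding distrib_left using left_nonneg right_nonneg by linarith
  next
    case 2
    then have "t \<in> {b-h..b}" using assms by auto
    then have "?lhs \<le> \<bar>ln a\<bar> powr \<alpha> * indicator {b-h..b} t"
      using 2 bound[of t] by (simp add: log_profile_def)
    then show ?thesis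
      unfolding distrib_left using inner_nonneg left_nonneg by linarith
  next
    case 3
    then have "t \<in> {a-h..a}" using assms by auto
    then have "?lhs \<le> \<bar>ln a\<bar> powr \<alpha> * indicator {a-h..a} t"
      using 3 bound[of "t + h"] by (simp add: log_profile_def)
    then show ?thesis
      unfolding distrib_left using inner_nonneg right_nonneg by linarith
  next
    case 4
    then show ?thesis
      using rhs_nonneg by (simp add: log_profile_def)
  qed
qed

lemma log_profile_shift_l1:
  assumes "0 < a" "a \<le> b" "b \<le> exp (-1)" "0 \<le> \<alpha>" "\<alpha> \<le> 1" "0 \<le> h"
  shows "integrable lborel (\<lambda>t. log_profile \<alpha> a b (t + h) - log_profile \<alpha> a b t)" (is ?integrable)
    and "(\<integral>t. \<bar>log_profile \<alpha> a b (t + h) - log_profile \<alpha> a b t\<bar> \<partial>lborel)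
      \<le> ((b - a) / a + 2 * \<bar>ln a\<bar> powr \<alpha>) * h"
proof -
  define D where "D t = h / a * indicator {a..b} t
    + \<bar>ln a\<bar> powr \<alpha> * (indicator {a-h..a} t + indicator {b-h..b} t)" for t :: real
  have "integrable lborel (indicator {l..u} :: real \<Rightarrow> real)" for l u :: real
    by (rule integrable_real_indicator) (auto simp: emeasure_lborel_Icc_eq)
  then have D: "integrable lborel D"
    unfolding D_def by (intro Bochner_Integration.integrable_add integrable_mult_right) auto
  have pointwise: "\<bar>log_profile \<alpha> a b (t + h) - log_profile \<alpha> a b t\<bar> \<le> D t" for t
    unfolding D_def by (rule log_profile_shift_diff_le[OF assms])
  show ?integrable
  proof (rule Bochner_Integration.integrable_bound[OF D])
    show "AE t in lborel. norm (log_profile \<alpha> a b (t + h) - log_profile \<alpha> a b t) \<le> norm (D t)"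
      using pointwise by (intro AE_I2) (simp add: order.trans[OF _ abs_ge_self])
  qed measurable
  then have "(\<integral>t. \<bar>log_profile \<alpha> a b (t + h) - log_profile \<alpha> a b t\<bar> \<partial>lborel) \<le> integral\<^sup>L lborel D"
    using D pointwise by (intro integral_mono integrable_abs) auto
  also have "integral\<^sup>L lborel D = h / a * (b - a) + \<bar>ln a\<bar> powr \<alpha> * (h + h)"
    using assms unfolding D_def by (simp add: integral_add integral_mult_right)
  also have "\<dots> = ((b - a) / a + 2 * \<bar>ln a\<bar> powr \<alpha>) * h"
    by (simp add: algebra_simps)
  finally show "(\<integral>t. \<bar>log_profile \<alpha> a b (t + h) - log_profile \<alpha> a b t\<bar> \<partial>lborel)
      \<le> ((b - a) / a + 2 * \<bar>ln a\<bar> powr \<alpha>) * h" .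
qed

section \<open>Cutting off in the plane\<close>

definition plateau_cutoff :: "'a::metric_space \<Rightarrow> real \<Rightarrow> 'a \<Rightarrow> real" where
  "plateau_cutoff c r p = max 0 (min 1 (2 - 2 * dist p c / r))"

lemma plateau_cutoff_bounds: "0 \<le> plateau_cutoff c r p" "plateau_cutoff c r p \<le> 1"
  by (simp_all add: plateau_cutoff_def)

lemma plateau_cutoff_eq_one: "0 < r \<Longrightarrow> dist p c \<le> r / 2 \<Longrightarrow> plateau_cutoff c r p = 1"
  by (simp add: plateau_cutoff_def field_simps)

lemma plateau_cutoff_eq_zero: "0 < r \<Longrightarrow> r \<le> dist p c \<Longrightarrow> plateau_cutoff c r p = 0"
  by (simp add: plateau_cutoff_def field_simps)

lemma abs_clamp_diff_le: "\<bar>max 0 (min 1 s) - max 0 (min 1 t)\<bar> \<le> \<bar>s - t\<bar>" for s t :: real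
  by (auto simp: max_def min_def)

lemma plateau_cutoff_lipschitz:
  assumes "0 < r"
  shows "\<bar>plateau_cutoff c r p - plateau_cutoff c r q\<bar> \<le> 2 / r * dist p q"
proof -
  have "\<bar>plateau_cutoff c r p - plateau_cutoff c r q\<bar> \<le> \<bar>(2 - 2 * dist p c / r) - (2 - 2 * dist q c / r)\<bar>"
    unfolding plateau_cutoff_def by (rule abs_clamp_diff_le)
  also have "(2 - 2 * dist p c / r) - (2 - 2 * dist q c / r) = 2 / r * (dist q c - dist p c)"
    using assms by (simp add: field_simps)
  also have "\<bar>2 / r * (dist q c - dist p c)\<bar> = 2 / r * \<bar>dist q c - dist p c\<bar>"
    using assms by (subst abs_mult) simp
  also have "\<dots> \<le> 2 / r * dist p q"
    using assms dist_triangle[of p c q] dist_triangle[of q c p]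
    by (intro mult_left_mono) (auto simp: dist_commute abs_le_iff)
  finally show ?thesis .
qed

lemma lipschitz_mult_cutoff:
  fixes u :: "'a::metric_space \<Rightarrow> real" and \<psi> :: "'a \<times> 'b::metric_space \<Rightarrow> real"
  assumes "\<And>x. \<bar>u x\<bar> \<le> K" and "\<And>x y. \<bar>u x - u y\<bar> \<le> L * dist x y" and "0 \<le> L"
    and "\<And>p. 0 \<le> \<psi> p" "\<And>p. \<psi> p \<le> 1" and "\<And>p q. \<bar>\<psi> p - \<psi> q\<bar> \<le> L' * dist p q"
  shows "\<bar>u (fst p) * \<psi> p - u (fst q) * \<psi> q\<bar> \<le> (L + K * L') * dist p q"
proof -
  have "\<bar>(u (fst p) - u (fst q)) * \<psi> p\<bar> \<le> L * dist (fst p) (fst q) * 1"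
    unfolding abs_mult using assms(2-5) by (intro mult_mono) auto
  also have "\<dots> \<le> L * dist p q"
    using dist_fst_le[of p q] assms(3) by (simp add: mult_left_mono)
  finally have "\<bar>(u (fst p) - u (fst q)) * \<psi> p\<bar> \<le> L * dist p q" .
  moreover have "\<bar>u (fst q) * (\<psi> p - \<psi> q)\<bar> \<le> K * (L' * dist p q)"
    unfolding abs_mult using assms(1,6) by (intro mult_mono) (auto intro: order.trans[OF abs_ge_zero])
  moreover have "u (fst p) * \<psi> p - u (fst q) * \<psi> q
      = (u (fst p) - u (fst q)) * \<psi> p + u (fst q) * (\<psi> p - \<psi> q)"
    by (simp add: algebra_simps)
  ultimately show ?thesis
    by (smt (verit) distrib_right mult.assoc abs_triangle_ineq)
qed

lemma cball_subset_cbox_Pair: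
  fixes x y r :: real
  shows "cball (x, y) r \<subseteq> cbox (x - r, y - r) (x + r, y + r)"
proof
  fix p assume "p \<in> cball (x, y) r"
  then have "dist (fst p) x \<le> r" "dist (snd p) y \<le> r"
    using dist_fst_le[of p "(x, y)"] dist_snd_le[of p "(x, y)"] by (auto simp: dist_commute)
  then show "p \<in> cbox (x - r, y - r) (x + r, y + r)"
    by (cases p) (auto simp: cbox_Pair_eq dist_real_def)
qed

lemma emeasure_cbox_square: "0 \<le> r \<Longrightarrow> emeasure lborel (cbox (x - r, y - r) (x + r, y + r :: real)) = ennreal ((2 * r)^2)"
  by (simp add: emeasure_lborel_cbox_eq Basis_prod_def power2_eq_square)

lemma H_half_mult_plateau_cutoff:
  fixes u :: "real \<Rightarrow> real" and cx cy r :: real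
  assumes K: "0 < K" and L: "0 < L" and r: "0 < r"
    and bounded: "\<And>x. \<bar>u x\<bar> \<le> K" and lipschitz: "\<And>x x'. \<bar>u x - u x'\<bar> \<le> L * dist x x'"
  defines "w \<equiv> \<lambda>p. u (fst p) * plateau_cutoff (cx, cy) r p"
  shows "w \<in> H_half" and "compact (closure {p. w p \<noteq> 0})"
    and "Hdot_half_norm w \<le> 8 * sqrt ((2 * r)^2 * K * (L + K * (2 / r)))"
    and "(x - cx)^2 + (y - cy)^2 \<le> (r / 2)^2 \<Longrightarrow> w (x, y) = u x"
proof -
  define S where "S = cbox (cx - r, cy - r) (cx + r, cy + r)"
  have w_bounded: "\<bar>w p\<bar> \<le> K" for p
  proof -
    have "\<bar>u (fst p)\<bar> * \<bar>plateau_cutoff (cx, cy) r p\<bar> \<le> K * 1"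
      using K by (intro mult_mono bounded) (auto simp: plateau_cutoff_bounds)
    then show ?thesis
      by (simp add: w_def abs_mult)
  qed
  have w_lipschitz: "\<bar>w p - w q\<bar> \<le> (L + K * (2 / r)) * dist p q" for p q
    unfolding w_def using L
    by (intro lipschitz_mult_cutoff bounded lipschitz plateau_cutoff_bounds plateau_cutoff_lipschitz r) simp
  have w_support: "w p = 0" if "p \<notin> S" for p
  proof -
    have "p \<notin> cball (cx, cy) r"
      using that cball_subset_cbox_Pair[of cx cy r] unfolding S_def by blast
    then show ?thesis
      using r by (simp add: w_def dist_commute plateau_cutoff_eq_zero)
  qed
  have S: "compact S" "emeasure lborel S = ennreal ((2 * r)^2)"
    unfolding S_def using r by (simp_all only: compact_cbox emeasure_cbox_square less_imp_le)
  have "0 < L + K * (2 / r)"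
    using K L r by (intro add_pos_pos mult_pos_pos) auto
  note H_half = H_half_if_lipschitz[OF K this w_bounded w_lipschitz w_support S(1) eq_refl[OF S(2)]]
  show "w \<in> H_half"
    using H_half(1) by simp
  show "compact (closure {p. w p \<noteq> 0})"
    using S(1) w_support by (rule compact_closure_support)
  show "Hdot_half_norm w \<le> 8 * sqrt ((2 * r)^2 * K * (L + K * (2 / r)))"
    using H_half(2) by simp
  show "w (x, y) = u x" if "(x - cx)^2 + (y - cy)^2 \<le> (r / 2)^2"
  proof -
    have "dist (x, y) (cx, cy) \<le> r / 2"
      using real_sqrt_le_mono[OF that] r by (simp add: dist_Pair_Pair dist_real_def)
    then show ?thesis
      using r by (simp add: w_def plateau_cutoff_eq_one)
  qed
qed

lemma convolution_log_profile_bounds: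
  assumes \<zeta>: "integrable lborel \<zeta>" "\<And>y. 0 \<le> \<zeta> y" "\<And>y. \<zeta> y \<le> Z" "integral\<^sup>L lborel \<zeta> = 1"
    and ab: "0 < a" "a \<le> b" "b \<le> exp (-1)" and \<alpha>: "0 \<le> \<alpha>" "\<alpha> \<le> 1"
  shows "\<bar>convolution \<zeta> (log_profile \<alpha> a b) x\<bar> \<le> \<bar>ln a\<bar> powr \<alpha>"
    and "\<bar>convolution \<zeta> (log_profile \<alpha> a b) x - convolution \<zeta> (log_profile \<alpha> a b) x'\<bar>
      \<le> Z * ((b - a) / a + 2 * \<bar>ln a\<bar> powr \<alpha>) * dist x x'"
proof -
  have "b \<le> 1"
    using ab(3) by (meson exp_le_one_iff neg_le_0_iff_le order.trans zero_le_one)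
  then have bounded: "\<bar>log_profile \<alpha> a b t\<bar> \<le> \<bar>ln a\<bar> powr \<alpha>" for t
    using abs_log_profile_le ab \<alpha> by blast
  show "\<bar>convolution \<zeta> (log_profile \<alpha> a b) x\<bar> \<le> \<bar>ln a\<bar> powr \<alpha>"
    using \<zeta> by (intro abs_convolution_le bounded) auto
  show "\<bar>convolution \<zeta> (log_profile \<alpha> a b) x - convolution \<zeta> (log_profile \<alpha> a b) x'\<bar>
      \<le> Z * ((b - a) / a + 2 * \<bar>ln a\<bar> powr \<alpha>) * dist x x'"
    unfolding dist_real_def using \<zeta> log_profile_shift_l1[OF ab \<alpha>]
    by (intro convolution_lipschitz[where M = "\<bar>ln a\<bar> powr \<alpha>"] bounded) auto
qed

lemma log_convolution_lipschitz:
  assumes \<alpha>: "0 < \<alpha>" "\<alpha> \<le> 1" and \<eta>: "0 < \<eta>" "\<eta> < 1/10"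
    and \<zeta>: "integrable lborel \<zeta>" "\<And>y. 0 \<le> \<zeta> y" "\<And>y. \<zeta> y \<le> 20 / \<eta>" "integral\<^sup>L lborel \<zeta> = 1"
  defines "f \<equiv> convolution \<zeta> (log_profile \<alpha> (6 * \<eta> / 5) (9 * \<eta> / 5))"
    and "M \<equiv> \<bar>ln (6 * \<eta> / 5)\<bar> powr \<alpha>"
  shows "1 \<le> M" and "\<bar>f x\<bar> \<le> M" and "\<bar>f x - f x'\<bar> \<le> (10 + 40 * M) / \<eta> * dist x x'"
proof -
  have "exp (-1) \<ge> (1/3 :: real)"
    using exp_le by (simp add: exp_minus field_simps)
  then have ab: "0 < 6 * \<eta> / 5" "6 * \<eta> / 5 \<le> 9 * \<eta> / 5" "9 * \<eta> / 5 \<le> exp (-1)"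
    using \<eta> by auto
  have "ln (6 * \<eta> / 5) \<le> ln (exp (-1))"
    using ab by (subst ln_le_cancel_iff) auto
  then show "1 \<le> M"
    unfolding M_def using \<alpha> by (intro ge_one_powr_ge_zero) auto
  show "\<bar>f x\<bar> \<le> M"
    unfolding f_def M_def using \<alpha> by (intro convolution_log_profile_bounds(1)[OF \<zeta> ab]) auto
  have ratio: "20 / \<eta> * ((9 * \<eta> / 5 - 6 * \<eta> / 5) / (6 * \<eta> / 5) + 2 * M) = (10 + 40 * M) / \<eta>"
    using \<eta> by (simp add: field_simps)
  show "\<bar>f x - f x'\<bar> \<le> (10 + 40 * M) / \<eta> * dist x x'"
    using convolution_log_profile_bounds(2)[OF \<zeta> ab less_imp_le[OF \<alpha>(1)] \<alpha>(2), where x = x and x' = x',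
        folded f_def M_def, unfolded ratio] .
qed

lemma cutoff_norm_constant_le:
  fixes \<eta> \<theta> M :: real
  assumes "0 < \<eta>" "\<eta> \<le> 1" "0 \<le> \<theta>" "0 \<le> M"
  shows "8 * sqrt ((2 * \<eta>)^2 * (\<theta> * M) * (\<theta> * ((10 + 40 * M) / \<eta>) + \<theta> * M * (2 / \<eta>)))
    \<le> 104 * \<theta> * \<eta> powr (1/4) * (1 + M)"
proof -
  have "(2 * \<eta>)^2 * (\<theta> * M) * (\<theta> * ((10 + 40 * M) / \<eta>) + \<theta> * M * (2 / \<eta>))
      = \<eta> * \<theta>^2 * (4 * M * (10 + 42 * M))"
    using assms by (simp add: field_simps power2_eq_square)
  also have "\<dots> \<le> \<eta> * \<theta>^2 * (169 * (1 + M)^2)"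
    using assms by (intro mult_left_mono) (auto simp: power2_eq_square algebra_simps)
  also have "\<dots> = (13 * \<theta> * sqrt \<eta> * (1 + M))^2"
    using assms by (simp add: power_mult_distrib)
  finally have "8 * sqrt ((2 * \<eta>)^2 * (\<theta> * M) * (\<theta> * ((10 + 40 * M) / \<eta>) + \<theta> * M * (2 / \<eta>)))
      \<le> 8 * (13 * \<theta> * sqrt \<eta> * (1 + M))"
    using assms real_sqrt_le_mono by fastforce
  also have "\<dots> = 104 * \<theta> * (1 + M) * sqrt \<eta>"
    by simp
  also have "\<dots> \<le> 104 * \<theta> * (1 + M) * \<eta> powr (1/4)"
    using assms powr_mono'[of "1/4" "1/2" \<eta>] by (intro mult_left_mono) (simp_all add: powr_half_sqrt)
  also have "\<dots> = 104 * \<theta> * \<eta> powr (1/4) * (1 + M)"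
    by simp
  finally show ?thesis .
qed

lemma log_convolution_cutoff:
  fixes \<zeta> :: "real \<Rightarrow> real"
  assumes \<alpha>: "0 < \<alpha>" "\<alpha> \<le> 1" and \<eta>: "0 < \<eta>" "\<eta> < 1/10" and \<theta>: "0 < \<theta>"
    and \<zeta>: "\<forall>y. 0 \<le> \<zeta> y \<and> \<zeta> y \<le> 20 / \<eta>" "integral\<^sup>L lborel \<zeta> = 1"
  shows "\<exists>w. w \<in> H_half \<and> compact (closure {p. w p \<noteq> 0}) \<and>
          (\<forall>x Y. (x - 3 * \<eta> / 2)^2 + Y^2 \<le> (\<eta> / 2)^2 \<longrightarrow>
             w (x, Y) = \<theta> * integral\<^sup>L lborel
               (\<lambda>y. \<zeta> y * \<bar>ln (x - y)\<bar> powr \<alpha> * indicator {6 * \<eta> / 5 .. 9 * \<eta> / 5} (x - y))) \<and>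
          Hdot_half_norm w \<le> 104 * \<theta> * \<eta> powr (1/4) *
             (1 + \<bar>ln (6 * \<eta> / 5)\<bar> powr \<alpha> + \<bar>ln (9 * \<eta> / 5)\<bar> powr \<alpha>)"
proof -
  define f where "f = convolution \<zeta> (log_profile \<alpha> (6 * \<eta> / 5) (9 * \<eta> / 5))"
  define M where "M = \<bar>ln (6 * \<eta> / 5)\<bar> powr \<alpha>"
  have \<zeta>_integrable: "integrable lborel \<zeta>"
    using \<zeta>(2) not_integrable_integral_eq by fastforce
  have \<zeta>_bounds: "\<And>y. 0 \<le> \<zeta> y" "\<And>y. \<zeta> y \<le> 20 / \<eta>"
    using \<zeta>(1) by auto
  note f = log_convolution_lipschitz[OF \<alpha> \<eta> \<zeta>_integrable \<zeta>_bounds \<zeta>(2), folded f_def M_def]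
  have M: "1 \<le> M"
    by (rule f(1))
  have bounded: "\<bar>\<theta> * f x\<bar> \<le> \<theta> * M" for x
    using f(2)[of x] \<theta> by (simp add: abs_mult mult_left_mono)
  have lipschitz: "\<bar>\<theta> * f x - \<theta> * f x'\<bar> \<le> \<theta> * ((10 + 40 * M) / \<eta>) * dist x x'" for x x'
  proof -
    have "\<bar>\<theta> * f x - \<theta> * f x'\<bar> = \<theta> * \<bar>f x - f x'\<bar>"
      using \<theta> by (simp add: abs_mult flip: right_diff_distrib)
    also have "\<dots> \<le> \<theta> * ((10 + 40 * M) / \<eta> * dist x x')"
      using f(3)[of x x'] \<theta> by (intro mult_left_mono) auto
    finally show ?thesis
      by (simp add: mult.assoc)
  qed
  have "0 < \<theta> * M" "0 < \<theta> * ((10 + 40 * M) / \<eta>)"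
    using M \<theta> \<eta> by simp_all
  note w = H_half_mult_plateau_cutoff[OF this \<eta>(1) bounded lipschitz, where cx = "3 * \<eta> / 2" and cy = 0]
  let ?w = "\<lambda>p. \<theta> * f (fst p) * plateau_cutoff (3 * \<eta> / 2, 0) \<eta> p"
  have "Hdot_half_norm ?w \<le> 104 * \<theta> * \<eta> powr (1/4) * (1 + M)"
    by (rule order.trans[OF w(3) cutoff_norm_constant_le]) (use \<eta> \<theta> M in auto)
  also have "\<dots> \<le> 104 * \<theta> * \<eta> powr (1/4) * (1 + M + \<bar>ln (9 * \<eta> / 5)\<bar> powr \<alpha>)"
    using \<theta> by (intro mult_left_mono) auto
  finally have norm: "Hdot_half_norm ?w \<le> 104 * \<theta> * \<eta> powr (1/4) *
      (1 + \<bar>ln (6 * \<eta> / 5)\<bar> powr \<alpha> + \<bar>ln (9 * \<eta> / 5)\<bar> powr \<alpha>)"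
    by (simp only: M_def)
  have on_disk: "?w (x, Y) = \<theta> * integral\<^sup>L lborel
      (\<lambda>y. \<zeta> y * \<bar>ln (x - y)\<bar> powr \<alpha> * indicator {6 * \<eta> / 5 .. 9 * \<eta> / 5} (x - y))"
    if "(x - 3 * \<eta> / 2)^2 + Y^2 \<le> (\<eta> / 2)^2" for x Y
    using w(4)[where x = x and y = Y] that by (simp add: f_def convolution_def log_profile_def mult.assoc)
  show ?thesis
    by (intro exI[of _ ?w] conjI allI impI w(1) w(2) on_disk norm)
qed

theorem lemmaA2:
  fixes \<alpha> :: real
  assumes "0 < \<alpha>" and "\<alpha> < 1"
  shows "\<exists>C>0. \<exists>\<eta>0>0. \<forall>\<eta> \<theta> (\<zeta> :: real \<Rightarrow> real).
    0 < \<eta> \<and> \<eta> < \<eta>0 \<and> 0 < \<theta> \<and>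
    smooth_real \<zeta> \<and> (\<forall>y. \<bar>y\<bar> > \<eta> / 10 \<longrightarrow> \<zeta> y = 0) \<and>
    (\<forall>y. 0 \<le> \<zeta> y \<and> \<zeta> y \<le> 20 / \<eta>) \<and> integral\<^sup>L lborel \<zeta> = 1
    \<longrightarrow> (\<exists>w. w \<in> H_half \<and> compact (closure {p. w p \<noteq> 0}) \<and>
          (\<forall>x Y. (x - 3 * \<eta> / 2)^2 + Y^2 \<le> (\<eta> / 2)^2 \<longrightarrow>
             w (x, Y) = \<theta> * integral\<^sup>L lborel
               (\<lambda>y. \<zeta> y * \<bar>ln (x - y)\<bar> powr \<alpha> * indicator {6 * \<eta> / 5 .. 9 * \<eta> / 5} (x - y))) \<and>
          Hdot_half_norm w \<le> C * \<theta> * \<eta> powr (1/4) *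
             (1 + \<bar>ln (6 * \<eta> / 5)\<bar> powr \<alpha> + \<bar>ln (9 * \<eta> / 5)\<bar> powr \<alpha>))"
proof (rule exI[of _ 104], rule conjI, simp, rule exI[of _ "1/10"], rule conjI, simp, intro allI impI, elim conjE)
qed (rule log_convolution_cutoff[OF assms(1) less_imp_le[OF assms(2)]])

end
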